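(* Let $A\subseteq B$ be a ring extension (commutative rings with identity) with the finite character. Then every $B$-regular and locally principal ideal of $A$ is $B$-invertible.
   Context: For an $A$-submodule $S$ of $B$: $S$ is $B$-regular if $SB=B$; $S$ is $B$-invertible if there is an $A$-submodule $U$ of $B$ with $SU=A$. The extension $A\subseteq B$ has the finite character if every $B$-regular ideal of $A$ is contained in only finitely many maximal ideals of $A$. An ideal $\mathfrak a$ of $A$ is locally principal if $\mathfrak aA_{\mathfrak m}$ is principal for every maximal ideal $\mathfrak m$ of $A$. *)

theory Defs
  imports Main
begin

text \<open>Ring extension A \<subseteq> B: B is the ambient commutative ring (a type of class
comm_ring_1), A is a subring of B given as a set containing 1.\<close>

definition is_subring :: "'b::comm_ring_1 set \<Rightarrow> bool" where
  "is_subring A \<longleftrightarrow> 0 \<in> A \<and> 1 \<in> A \<and> (\<forall>x\<in>A. \<forall>y\<in>A. x + y \<in> A \<and> x * y \<in> A \<and> - x \<in> A)"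

definition A_submodule :: "'b::comm_ring_1 set \<Rightarrow> 'b set \<Rightarrow> bool" where
  "A_submodule A S \<longleftrightarrow> 0 \<in> S \<and> (\<forall>x\<in>S. \<forall>y\<in>S. x + y \<in> S) \<and> (\<forall>a\<in>A. \<forall>x\<in>S. a * x \<in> S)"

definition ideal_of :: "'b::comm_ring_1 set \<Rightarrow> 'b set \<Rightarrow> bool" where
  "ideal_of A I \<longleftrightarrow> A_submodule A I \<and> I \<subseteq> A"

definition maximal_ideal_of :: "'b::comm_ring_1 set \<Rightarrow> 'b set \<Rightarrow> bool" where
  "maximal_ideal_of A m \<longleftrightarrow> ideal_of A m \<and> m \<noteq> A \<and>
     (\<forall>J. ideal_of A J \<and> m \<subseteq> J \<longrightarrow> J = m \<or> J = A)"

definition mod_prod :: "'b::comm_ring_1 set \<Rightarrow> 'b set \<Rightarrow> 'b set" where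
  "mod_prod S U = {x. \<exists>(n::nat) s u. (\<forall>i<n. s i \<in> S \<and> u i \<in> U) \<and> x = (\<Sum>i<n. s i * u i)}"

definition B_regular :: "'b::comm_ring_1 set \<Rightarrow> bool" where
  "B_regular S \<longleftrightarrow> mod_prod S UNIV = UNIV"

definition B_invertible :: "'b::comm_ring_1 set \<Rightarrow> 'b set \<Rightarrow> bool" where
  "B_invertible A S \<longleftrightarrow> (\<exists>U. A_submodule A U \<and> mod_prod S U = A)"

definition finite_character :: "'b::comm_ring_1 set \<Rightarrow> bool" where
  "finite_character A \<longleftrightarrow>
     (\<forall>I. ideal_of A I \<and> B_regular I \<longrightarrow> finite {m. maximal_ideal_of A m \<and> I \<subseteq> m})"

text \<open>Locally principal: for every maximal ideal m, I A_m is principal.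
  Unfolded without a localization type: I A_m = (a/1) A_m for some a \<in> I, i.e.
  every b \<in> I satisfies t b = c a in A for some t \<in> A - m, c \<in> A.\<close>
definition locally_principal :: "'b::comm_ring_1 set \<Rightarrow> 'b set \<Rightarrow> bool" where
  "locally_principal A I \<longleftrightarrow>
     (\<forall>m. maximal_ideal_of A m \<longrightarrow>
        (\<exists>a\<in>I. \<forall>b\<in>I. \<exists>t\<in>A - m. \<exists>c\<in>A. t * b = c * a))"

end

theory Submission
  imports Defs
begin

text \<open>
  B-regularity gives finitely many x_i \<in> I with 1 = \<Sum> x_i b_i, b_i \<in> B. By finite character only
  finitely many maximal ideals contain all x_i; the x_i together with one local generator of I
  at each of these maximal ideals generate I, by a local-global argument. Hence, at every
  maximal ideal m, a single t \<notin> m satisfies t I \<subseteq> a A for a local generator a \<in> I.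
  Multiplying 1 = \<Sum> x_i b_i by t shows that a divides t in B, say t = a v; then u = t v
  satisfies u I \<subseteq> A and a u = t^2 \<notin> m. So I (A : I) lies in no maximal ideal, i.e. equals A.
\<close>

lemma is_subringD:
  assumes "is_subring A"
  shows "0 \<in> A" "1 \<in> A" "x \<in> A \<Longrightarrow> y \<in> A \<Longrightarrow> x + y \<in> A"
    "x \<in> A \<Longrightarrow> y \<in> A \<Longrightarrow> x * y \<in> A"
  using assms unfolding is_subring_def by auto

lemma A_submoduleD:
  assumes "A_submodule A S"
  shows "0 \<in> S" "x \<in> S \<Longrightarrow> y \<in> S \<Longrightarrow> x + y \<in> S" "a \<in> A \<Longrightarrow> x \<in> S \<Longrightarrow> a * x \<in> S"
  using assms unfolding A_submodule_def by auto

lemma A_submodule_self: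
  assumes "is_subring A"
  shows "A_submodule A A"
  using is_subringD[OF assms] unfolding A_submodule_def by blast

lemma ideal_ofD:
  assumes "ideal_of A I"
  shows "A_submodule A I" "I \<subseteq> A"
  using assms unfolding ideal_of_def by auto

lemma A_submodule_sum:
  assumes "A_submodule A S" "\<And>i. i \<in> X \<Longrightarrow> f i \<in> S"
  shows "sum f X \<in> S"
  using assms(2)
  by (induction X rule: infinite_finite_induct) (simp_all add: A_submoduleD[OF assms(1)])

lemma ideal_eq_if_one_mem:
  assumes "ideal_of A J" "1 \<in> J"
  shows "J = A"
proof
  show "J \<subseteq> A" using ideal_ofD(2)[OF assms(1)] .
  show "A \<subseteq> J"
    using A_submoduleD(3)[OF ideal_ofD(1)[OF assms(1)] _ assms(2)] by auto
qed

lemma ideal_of_Union_chain: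
  assumes "C \<noteq> {}" "\<And>J. J \<in> C \<Longrightarrow> ideal_of A J"
    and chain: "\<And>X Y. X \<in> C \<Longrightarrow> Y \<in> C \<Longrightarrow> X \<subseteq> Y \<or> Y \<subseteq> X"
  shows "ideal_of A (\<Union>C)"
  unfolding ideal_of_def A_submodule_def
proof (intro conjI ballI)
  show "0 \<in> \<Union>C" "\<Union>C \<subseteq> A"
    using assms(1,2) by (auto dest: ideal_ofD A_submoduleD(1))
next
  fix x y assume "x \<in> \<Union>C" "y \<in> \<Union>C"
  then obtain X Y where "X \<in> C" "Y \<in> C" "x \<in> X" "y \<in> Y" by blast
  with chain obtain Z where "Z \<in> C" "x \<in> Z" "y \<in> Z" by blast
  then show "x + y \<in> \<Union>C" using assms(2) by (blast dest: ideal_ofD A_submoduleD(2))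
next
  fix a x assume "a \<in> A" "x \<in> \<Union>C"
  then show "a * x \<in> \<Union>C" using assms(2) by (blast dest: ideal_ofD A_submoduleD(3))
qed

lemma ideal_in_maximal_ideal:
  assumes sub: "is_subring A" and K: "ideal_of A K" "1 \<notin> K"
  obtains m where "maximal_ideal_of A m" "K \<subseteq> m"
proof -
  define S where "S = {J. ideal_of A J \<and> K \<subseteq> J \<and> 1 \<notin> J}"
  have "\<Union>C \<in> S" if "C \<noteq> {}" "subset.chain S C" for C
    using that ideal_of_Union_chain[of C A] by (auto simp: S_def subset_chain_def)
  moreover have "S \<noteq> {}" using K by (auto simp: S_def)
  ultimately obtain M where M: "M \<in> S" and M_max: "\<And>X. X \<in> S \<Longrightarrow> M \<subseteq> X \<Longrightarrow> X = M"
    using subset_Zorn_nonempty[of S] by blast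
  have "maximal_ideal_of A M"
    unfolding maximal_ideal_of_def
  proof (intro conjI allI impI)
    show "ideal_of A M" "M \<noteq> A" using M is_subringD(2)[OF sub] by (auto simp: S_def)
  next
    fix J assume J: "ideal_of A J \<and> M \<subseteq> J"
    show "J = M \<or> J = A"
    proof (cases "1 \<in> J")
      case True then show ?thesis using ideal_eq_if_one_mem J by blast
    next
      case False then show ?thesis using M_max J M by (auto simp: S_def)
    qed
  qed
  then show thesis using that M by (auto simp: S_def)
qed

lemma mem_ideal_if_locally_mem:
  assumes sub: "is_subring A" and N: "ideal_of A N" and "c \<in> A"
    and loc: "\<And>m. maximal_ideal_of A m \<Longrightarrow> \<exists>t\<in>A - m. t * c \<in> N"
  shows "c \<in> N"
proof -
  define K where "K = {s \<in> A. s * c \<in> N}"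
  have "ideal_of A K"
    unfolding ideal_of_def A_submodule_def K_def
    using is_subringD[OF sub] A_submoduleD[OF ideal_ofD(1)[OF N]]
    by (auto simp: distrib_right mult.assoc)
  moreover have "\<not> K \<subseteq> m" if "maximal_ideal_of A m" for m
    using loc[OF that] by (auto simp: K_def)
  ultimately have "1 \<in> K"
    using ideal_in_maximal_ideal[OF sub] by metis
  then show "c \<in> N" by (simp add: K_def)
qed

lemma maximal_ideal_mult_notin:
  assumes sub: "is_subring A" and m: "maximal_ideal_of A m"
    and x: "x \<in> A - m" and y: "y \<in> A - m"
  shows "x * y \<notin> m"
proof
  assume xy: "x * y \<in> m"
  have m_ideal: "ideal_of A m" using m by (simp add: maximal_ideal_of_def)
  note m_sub = A_submoduleD[OF ideal_ofD(1)[OF m_ideal]] and A = is_subringD[OF sub]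
  define J where "J = {z + r * x | z r. z \<in> m \<and> r \<in> A}"
  have "ideal_of A J"
    unfolding ideal_of_def A_submodule_def
  proof (intro conjI ballI)
    show "0 \<in> J" unfolding J_def using m_sub(1) A(1) by force
    show "J \<subseteq> A" unfolding J_def using ideal_ofD(2)[OF m_ideal] A x by auto
  next
    fix a b assume "a \<in> J" "b \<in> J"
    then obtain z r z' r' where "a = z + r * x" "b = z' + r' * x" "z \<in> m" "r \<in> A" "z' \<in> m" "r' \<in> A"
      unfolding J_def by blast
    moreover have "a + b = (z + z') + (r + r') * x"
      using calculation by (simp add: algebra_simps)
    ultimately show "a + b \<in> J" unfolding J_def using m_sub(2) A(3) by blast
  next
    fix a b assume "a \<in> A" "b \<in> J"
    then obtain z r where "b = z + r * x" "z \<in> m" "r \<in> A"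
      unfolding J_def by blast
    moreover have "a * b = a * z + (a * r) * x"
      using calculation by (simp add: algebra_simps)
    ultimately show "a * b \<in> J" unfolding J_def using m_sub(3) A(4) \<open>a \<in> A\<close> by blast
  qed
  moreover have "m \<subseteq> J" unfolding J_def using A(1) by force
  moreover have "x \<in> J" unfolding J_def using m_sub(1) A(2) by force
  ultimately have "1 \<in> J"
    using m x A(2) by (auto simp: maximal_ideal_of_def)
  then obtain z r where zr: "1 = z + r * x" "z \<in> m" "r \<in> A" unfolding J_def by auto
  have "y = y * z + r * (x * y)" using zr(1) by (metis distrib_left mult.commute mult.left_commute mult_1_right)
  also have "\<dots> \<in> m" using zr xy y m_sub by (simp add: mult.commute)
  finally show False using y by simp
qed

lemma one_notin_maximal_ideal:
  assumes "maximal_ideal_of A m"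
  shows "1 \<notin> m"
  using assms ideal_eq_if_one_mem by (auto simp: maximal_ideal_of_def)

text \<open>Only meaningful for finite X: an infinite sum is 0, so then A_span A X = {0}.\<close>
definition A_span :: "'b::comm_ring_1 set \<Rightarrow> 'b set \<Rightarrow> 'b set" where
  "A_span A X = {\<Sum>y\<in>X. r y * y | r. \<forall>y\<in>X. r y \<in> A}"

lemma A_submodule_A_span:
  assumes sub: "is_subring A"
  shows "A_submodule A (A_span A X)"
  unfolding A_submodule_def
proof (intro conjI ballI)
  show "0 \<in> A_span A X"
    unfolding A_span_def using is_subringD(1)[OF sub] by (auto intro!: exI[of _ "\<lambda>_. 0"])
next
  fix a b assume "a \<in> A_span A X" "b \<in> A_span A X"
  then obtain r r' where "\<forall>y\<in>X. r y \<in> A" "\<forall>y\<in>X. r' y \<in> A"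
    "a + b = (\<Sum>y\<in>X. (r y + r' y) * y)"
    unfolding A_span_def by (auto simp: sum.distrib distrib_right)
  then show "a + b \<in> A_span A X"
    unfolding A_span_def using is_subringD(3)[OF sub] by auto
next
  fix a b assume "a \<in> A" "b \<in> A_span A X"
  then obtain r where "\<forall>y\<in>X. r y \<in> A" "a * b = (\<Sum>y\<in>X. (a * r y) * y)"
    unfolding A_span_def by (auto simp: sum_distrib_left mult.assoc)
  then show "a * b \<in> A_span A X"
    unfolding A_span_def using is_subringD(4)[OF sub] \<open>a \<in> A\<close> by auto
qed

lemma A_span_least:
  assumes "A_submodule A N" "X \<subseteq> N"
  shows "A_span A X \<subseteq> N"
  unfolding A_span_def
  using assms A_submoduleD(3)[OF assms(1)] by (auto intro!: A_submodule_sum)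

lemma ideal_of_A_span:
  assumes sub: "is_subring A" and "X \<subseteq> A"
  shows "ideal_of A (A_span A X)"
  unfolding ideal_of_def
  using A_submodule_A_span[OF sub] A_span_least[OF A_submodule_self[OF sub]] assms(2) by blast

lemma mem_A_span:
  assumes sub: "is_subring A" and "finite X" "y \<in> X"
  shows "y \<in> A_span A X"
proof -
  have "(\<Sum>z\<in>X. (if z = y then 1 else 0) * z) = y"
    using assms(2,3) by (simp add: if_distrib[of "\<lambda>c. c * _"] cong: if_cong)
  then show ?thesis
    unfolding A_span_def using is_subringD(1,2)[OF sub]
    by (auto intro!: exI[of _ "\<lambda>z. if z = y then 1 else 0"])
qed

lemma sum_lessThan_add:
  fixes h :: "nat \<Rightarrow> 'a::comm_monoid_add"
  shows "(\<Sum>i<n + k. h i) = (\<Sum>i<n. h i) + (\<Sum>i<k. h (n + i))"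
  by (induction k) (simp_all add: ac_simps)

lemma mod_prod_memI:
  fixes n :: nat
  assumes "\<forall>i<n. s i \<in> S \<and> u i \<in> U" "x = (\<Sum>i<n. s i * u i)"
  shows "x \<in> mod_prod S U"
  unfolding mod_prod_def using assms by blast

lemma mod_prod_memE:
  assumes "x \<in> mod_prod S U"
  obtains n :: nat and s u where "\<forall>i<n. s i \<in> S \<and> u i \<in> U" "x = (\<Sum>i<n. s i * u i)"
  using assms unfolding mod_prod_def by blast

lemma mult_mem_mod_prod:
  assumes "s \<in> S" "u \<in> U"
  shows "s * u \<in> mod_prod S U"
  using assms by (intro mod_prod_memI[of "Suc 0" "\<lambda>_. s" S "\<lambda>_. u"]) simp_all

lemma mod_prod_add:
  assumes "x \<in> mod_prod S U" "y \<in> mod_prod S U"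
  shows "x + y \<in> mod_prod S U"
proof -
  obtain n :: nat and f g where fg: "\<forall>i<n. f i \<in> S \<and> g i \<in> U" "x = (\<Sum>i<n. f i * g i)"
    using assms(1) by (rule mod_prod_memE)
  obtain k :: nat and f' g' where fg': "\<forall>i<k. f' i \<in> S \<and> g' i \<in> U" "y = (\<Sum>i<k. f' i * g' i)"
    using assms(2) by (rule mod_prod_memE)
  define s where "s i = (if i < n then f i else f' (i - n))" for i
  define u where "u i = (if i < n then g i else g' (i - n))" for i
  show ?thesis
  proof (rule mod_prod_memI)
    show "\<forall>i<n + k. s i \<in> S \<and> u i \<in> U"
      using fg(1) fg'(1) by (auto simp: s_def u_def)
    show "x + y = (\<Sum>i<n + k. s i * u i)"
      by (simp add: sum_lessThan_add fg(2) fg'(2) s_def u_def)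
  qed
qed

lemma mod_prod_mult:
  assumes "x \<in> mod_prod S U" "\<And>u. u \<in> U \<Longrightarrow> w * u \<in> U"
  shows "w * x \<in> mod_prod S U"
proof -
  obtain n :: nat and f g where fg: "\<forall>i<n. f i \<in> S \<and> g i \<in> U" "x = (\<Sum>i<n. f i * g i)"
    using assms(1) by (rule mod_prod_memE)
  show ?thesis
  proof (rule mod_prod_memI[of n f S "\<lambda>i. w * g i"])
    show "\<forall>i<n. f i \<in> S \<and> w * g i \<in> U"
      using fg(1) assms(2) by simp
    show "w * x = (\<Sum>i<n. f i * (w * g i))"
      unfolding fg(2) sum_distrib_left by (simp add: mult.left_commute)
  qed
qed

lemma mod_prod_mono:
  assumes "S \<subseteq> S'"
  shows "mod_prod S U \<subseteq> mod_prod S' U"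
  unfolding mod_prod_def using assms by blast

lemma ideal_of_mod_prod:
  assumes "A_submodule A U" "mod_prod S U \<subseteq> A"
  shows "ideal_of A (mod_prod S U)"
  unfolding ideal_of_def A_submodule_def
proof (intro conjI ballI)
  show "0 \<in> mod_prod S U"
    unfolding mod_prod_def by (auto intro!: exI[of _ "0::nat"])
next
  fix a x assume "a \<in> A" "x \<in> mod_prod S U"
  then show "a * x \<in> mod_prod S U"
    using mod_prod_mult A_submoduleD(3)[OF assms(1)] by blast
qed (use assms(2) mod_prod_add in auto)

lemma B_regular_iff_one_mem: "B_regular S \<longleftrightarrow> 1 \<in> mod_prod S UNIV"
proof
  assume "1 \<in> mod_prod S UNIV"
  then have "z * 1 \<in> mod_prod S UNIV" for z
    by (rule mod_prod_mult) simp
  then show "B_regular S" unfolding B_regular_def by auto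
qed (simp add: B_regular_def)

lemma B_regular_finite_subset:
  assumes "B_regular S"
  obtains X where "finite X" "X \<subseteq> S" "B_regular X"
proof -
  obtain n :: nat and x b where xb: "\<forall>i<n. x i \<in> S \<and> b i \<in> UNIV" "1 = (\<Sum>i<n. x i * b i)"
    using assms unfolding B_regular_iff_one_mem by (rule mod_prod_memE)
  then have "1 \<in> mod_prod (x ` {..<n}) UNIV"
    by (intro mod_prod_memI[of n x _ b]) simp_all
  then show thesis
    using that[of "x ` {..<n}"] xb(1) by (auto simp: B_regular_iff_one_mem)
qed

lemma finite_maximal_ideals_over:
  assumes sub: "is_subring A" and fc: "finite_character A"
    and X: "finite X" "X \<subseteq> A" "B_regular X"
  shows "finite {m. maximal_ideal_of A m \<and> X \<subseteq> m}"
proof -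
  have X_span: "X \<subseteq> A_span A X" using mem_A_span[OF sub X(1)] by blast
  have "B_regular (A_span A X)"
    using X(3) mod_prod_mono[OF X_span] by (auto simp: B_regular_def)
  then have "finite {m. maximal_ideal_of A m \<and> A_span A X \<subseteq> m}"
    using fc ideal_of_A_span[OF sub X(2)] by (simp add: finite_character_def)
  moreover have "A_span A X \<subseteq> m \<longleftrightarrow> X \<subseteq> m" if "maximal_ideal_of A m" for m
    using that X_span A_span_least[of A m X]
    by (auto simp: maximal_ideal_of_def ideal_of_def)
  ultimately show ?thesis
    by (simp cong: conj_cong)
qed

lemma locally_principal_finitely_generated:
  assumes sub: "is_subring A" and fc: "finite_character A" and I: "ideal_of A I"
    and reg: "B_regular I" and lp: "locally_principal A I"
  obtains F where "finite F" "F \<subseteq> I" "I \<subseteq> A_span A F"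
proof -
  have IA: "I \<subseteq> A" using ideal_ofD(2)[OF I] .
  obtain X where X: "finite X" "X \<subseteq> I" "B_regular X"
    using reg by (rule B_regular_finite_subset)
  define M where "M = {m. maximal_ideal_of A m \<and> X \<subseteq> m}"
  have "finite M"
    unfolding M_def using finite_maximal_ideals_over[OF sub fc] X IA by blast
  obtain g where g: "\<And>m. maximal_ideal_of A m \<Longrightarrow>
      g m \<in> I \<and> (\<forall>b\<in>I. \<exists>t\<in>A - m. \<exists>c\<in>A. t * b = c * g m)"
    using lp unfolding locally_principal_def by metis
  define F where "F = X \<union> g ` M"
  have F: "finite F" "F \<subseteq> I"
    using \<open>finite M\<close> X g by (auto simp: F_def M_def)
  have span: "A_submodule A (A_span A F)" "ideal_of A (A_span A F)"
    using A_submodule_A_span[OF sub] ideal_of_A_span[OF sub] F(2) IA by auto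
  have F_span: "y \<in> A_span A F" if "y \<in> F" for y
    using mem_A_span[OF sub F(1) that] .
  have "c \<in> A_span A F" if c: "c \<in> I" for c
  proof (rule mem_ideal_if_locally_mem[OF sub span(2)])
    show "c \<in> A" using c IA by blast
    fix m assume m: "maximal_ideal_of A m"
    show "\<exists>t\<in>A - m. t * c \<in> A_span A F"
    proof (cases "X \<subseteq> m")
      case True
      then have "g m \<in> F" using m by (simp add: F_def M_def)
      moreover obtain t d where "t \<in> A - m" "d \<in> A" "t * c = d * g m"
        using g[OF m] c by blast
      ultimately show ?thesis using F_span A_submoduleD(3)[OF span(1)] by metis
    next
      case False
      then obtain x where x: "x \<in> X" "x \<notin> m" by blast
      then have "x \<in> A" using X(2) IA by blast
      moreover have "c * x \<in> A_span A F"
        using A_submoduleD(3)[OF span(1)] F_span c IA x(1) by (auto simp: F_def)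
      ultimately show ?thesis using x(2) by (metis DiffI mult.commute)
    qed
  qed
  then show thesis using that F by blast
qed

lemma common_denominator:
  assumes sub: "is_subring A" and m: "maximal_ideal_of A m" and "finite F"
    and "\<forall>y\<in>F. \<exists>t\<in>A - m. \<exists>c\<in>A. t * y = c * a"
  shows "\<exists>t\<in>A - m. \<forall>y\<in>F. \<exists>c\<in>A. t * y = c * a"
  using assms(3,4)
proof (induction F rule: finite_induct)
  case empty
  then show ?case using is_subringD(2)[OF sub] one_notin_maximal_ideal[OF m] by blast
next
  case (insert y F)
  then obtain t c s where ts: "t \<in> A - m" "c \<in> A" "t * y = c * a" "s \<in> A - m"
    and s: "\<forall>z\<in>F. \<exists>d\<in>A. s * z = d * a"
    by auto
  have "s * t \<in> A - m"
    using ts maximal_ideal_mult_notin[OF sub m] is_subringD(4)[OF sub] by auto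
  moreover have "\<exists>d\<in>A. (s * t) * z = d * a" if z: "z \<in> insert y F" for z
  proof (cases "z = y")
    case True
    then show ?thesis using ts is_subringD(4)[OF sub]
      by (metis DiffD1 mult.assoc)
  next
    case False
    then obtain d where "d \<in> A" "s * z = d * a" using s z by auto
    then show ?thesis using ts is_subringD(4)[OF sub]
      by (metis DiffD1 mult.assoc mult.commute)
  qed
  ultimately show ?case by blast
qed

lemma locally_principal_common_denominator:
  assumes sub: "is_subring A" and lp: "locally_principal A I" and m: "maximal_ideal_of A m"
    and F: "finite F" "F \<subseteq> I" "I \<subseteq> A_span A F"
  shows "\<exists>a\<in>I. \<exists>t\<in>A - m. \<forall>y\<in>I. \<exists>c\<in>A. t * y = c * a"
proof -
  obtain a where a: "a \<in> I" "\<forall>b\<in>I. \<exists>t\<in>A - m. \<exists>c\<in>A. t * b = c * a"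
    using lp m unfolding locally_principal_def by blast
  then obtain t where t: "t \<in> A - m" "\<forall>y\<in>F. \<exists>c\<in>A. t * y = c * a"
    using common_denominator[OF sub m F(1)] F(2) by blast
  define N where "N = {y. \<exists>c\<in>A. t * y = c * a}"
  have "A_submodule A N"
    unfolding A_submodule_def
  proof (intro conjI ballI)
    show "0 \<in> N" unfolding N_def using is_subringD(1)[OF sub] by force
  next
    fix y z assume "y \<in> N" "z \<in> N"
    then obtain c d where "c \<in> A" "d \<in> A" "t * y = c * a" "t * z = d * a"
      unfolding N_def by blast
    then have "c + d \<in> A" "t * (y + z) = (c + d) * a"
      using is_subringD(3)[OF sub] by (simp_all add: distrib_left distrib_right)
    then show "y + z \<in> N" unfolding N_def by blast
  next
    fix r y assume "r \<in> A" "y \<in> N"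
    then obtain c where "c \<in> A" "t * y = c * a"
      unfolding N_def by blast
    then have "r * c \<in> A" "t * (r * y) = (r * c) * a"
      using is_subringD(4)[OF sub] \<open>r \<in> A\<close> by (simp_all add: mult.assoc mult.left_commute)
    then show "r * y \<in> N" unfolding N_def by blast
  qed
  then have "I \<subseteq> N"
    using A_span_least[of A N F] t(2) F(3) by (auto simp: N_def)
  then show ?thesis using a(1) t(1) by (auto simp: N_def)
qed

lemma B_regular_generator_dvd:
  assumes reg: "B_regular I" and t: "\<forall>y\<in>I. \<exists>c\<in>A. t * y = c * a"
  shows "a dvd t"
proof -
  obtain n :: nat and x b where xb: "\<forall>i<n. x i \<in> I \<and> b i \<in> UNIV" "1 = (\<Sum>i<n. x i * b i)"
    using reg unfolding B_regular_iff_one_mem by (rule mod_prod_memE)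
  have "\<forall>i<n. \<exists>c. t * x i = c * a"
    using xb(1) t by blast
  then obtain c where c: "\<forall>i<n. t * x i = c i * a"
    by metis
  have "t = t * (\<Sum>i<n. x i * b i)" using xb(2) by simp
  also have "\<dots> = (\<Sum>i<n. (t * x i) * b i)"
    by (simp add: sum_distrib_left mult.assoc)
  also have "\<dots> = a * (\<Sum>i<n. c i * b i)"
    unfolding sum_distrib_left by (rule sum.cong) (simp_all add: c ac_simps)
  finally show ?thesis by simp
qed

lemma B_invertible_if_locally_principal_with_common_denominator:
  assumes sub: "is_subring A" and reg: "B_regular I"
    and loc: "\<And>m. maximal_ideal_of A m \<Longrightarrow> \<exists>a\<in>I. \<exists>t\<in>A - m. \<forall>y\<in>I. \<exists>c\<in>A. t * y = c * a"
  shows "B_invertible A I"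
proof -
  define U where "U = {u. \<forall>y\<in>I. u * y \<in> A}"
  have U: "A_submodule A U"
    unfolding A_submodule_def U_def using is_subringD[OF sub]
    by (auto simp: distrib_right mult.assoc)
  have "mod_prod I U \<subseteq> A"
  proof
    fix z assume "z \<in> mod_prod I U"
    then obtain n :: nat and s u where su: "\<forall>i<n. s i \<in> I \<and> u i \<in> U" "z = (\<Sum>i<n. s i * u i)"
      by (rule mod_prod_memE)
    show "z \<in> A"
      unfolding su(2) using su(1)
      by (intro A_submodule_sum[OF A_submodule_self[OF sub]]) (auto simp: U_def mult.commute)
  qed
  then have P: "ideal_of A (mod_prod I U)"
    using ideal_of_mod_prod[OF U] by blast
  have "1 \<in> mod_prod I U"
  proof (rule mem_ideal_if_locally_mem[OF sub P is_subringD(2)[OF sub]])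
    fix m assume m: "maximal_ideal_of A m"
    then obtain a t where a: "a \<in> I" and t: "t \<in> A - m" "\<forall>y\<in>I. \<exists>c\<in>A. t * y = c * a"
      using loc by blast
    obtain v where v: "t = a * v"
      using B_regular_generator_dvd[OF reg t(2)] by blast
    have "t * v \<in> U"
      unfolding U_def
    proof (intro CollectI ballI)
      fix y assume "y \<in> I"
      then obtain d where "d \<in> A" "t * y = d * a" using t(2) by blast
      then have "t * v * y = d * t" by (metis v mult.commute mult.left_commute)
      then show "t * v * y \<in> A" using \<open>d \<in> A\<close> t(1) is_subringD(4)[OF sub] by simp
    qed
    then have "t * t * 1 \<in> mod_prod I U"
      using mult_mem_mod_prod[OF a] v by (metis mult.left_commute mult_1_right)
    moreover have "t * t \<in> A - m"
      using t(1) maximal_ideal_mult_notin[OF sub m] is_subringD(4)[OF sub] by auto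
    ultimately show "\<exists>s\<in>A - m. s * 1 \<in> mod_prod I U" by blast
  qed
  then have "mod_prod I U = A" by (rule ideal_eq_if_one_mem[OF P])
  then show ?thesis unfolding B_invertible_def using U by blast
qed

theorem corollary3p5:
  fixes A I :: "'b::comm_ring_1 set"
  assumes "is_subring A"
    and "finite_character A"
    and "ideal_of A I"
    and "B_regular I"
    and "locally_principal A I"
  shows "B_invertible A I"
proof -
  obtain F where F: "finite F" "F \<subseteq> I" "I \<subseteq> A_span A F"
    using locally_principal_finitely_generated[OF assms] .
  show ?thesis
    using B_invertible_if_locally_principal_with_common_denominator[OF assms(1,4)]
      locally_principal_common_denominator[OF assms(1,5) _ F] by blast
qed

end
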